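(* Let $(X,\mathrm{dist})$ be a metric space, $\Sigma$ a metric space, $\{U_\sigma(t,\tau)\}_{\sigma\in\Sigma}$ a family of processes on $X$, and $\Sigma_0\subset\Sigma$ a dense subset. Suppose that for every bounded set $C\subset X$ there exists $t_C\ge0$ such that the map $\sigma\mapsto U_\sigma(t,\tau)x$ from $\Sigma$ to $X$ is continuous for every fixed $x\in C$ and all $t,\tau$ with $t-\tau\ge t_C$. Then every set $K\subset X$ that is uniformly attracting for the subfamily $\{U_\sigma(t,\tau)\}_{\sigma\in\Sigma_0}$ is uniformly attracting for the whole family $\{U_\sigma(t,\tau)\}_{\sigma\in\Sigma}$.
   Context: A process on $X$ is a family of maps $U(t,\tau):X\to X$, indexed by reals $t\ge\tau$, with $U(\tau,\tau)=\mathrm{id}_X$ and $U(t,\tau)=U(t,s)U(s,\tau)$ for $t\ge s\ge\tau$. For nonempty $B,C\subset X$, $\delta_X(B,C)=\sup_{x\in B}\inf_{\xi\in C}\mathrm{dist}(x,\xi)$. For a family $\{U_\sigma(t,\tau)\}_{\sigma\in\Lambda}$, a set $K\subset X$ is uniformly attracting if for every bounded $C\subset X$, $\lim_{t-\tau\to\infty}\sup_{\sigma\in\Lambda}\delta_X(U_\sigma(t,\tau)C,K)=0$. *)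

theory Defs
  imports "HOL-Analysis.Analysis"
begin

definition is_process :: "(real \<Rightarrow> real \<Rightarrow> 'a \<Rightarrow> 'a) \<Rightarrow> bool" where
  "is_process U \<longleftrightarrow> (\<forall>\<tau>. U \<tau> \<tau> = id) \<and>
     (\<forall>t s \<tau>. \<tau> \<le> s \<and> s \<le> t \<longrightarrow> U t \<tau> = U t s \<circ> U s \<tau>)"

text \<open>Hausdorff semi-distance, valued in extended reals
  (sup over empty set is -infinity, inf over empty set is +infinity).\<close>
definition hsemidist :: "'a::metric_space set \<Rightarrow> 'a set \<Rightarrow> ereal" where
  "hsemidist B C = (SUP x\<in>B. INF \<xi>\<in>C. ereal (dist x \<xi>))"

text \<open>Since the semidistance is nonnegative, convergence to 0 is expressed as eventually below every eps.\<close>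
definition unif_attracting ::
  "('s \<Rightarrow> real \<Rightarrow> real \<Rightarrow> 'a::metric_space \<Rightarrow> 'a) \<Rightarrow> 's set \<Rightarrow> 'a set \<Rightarrow> bool" where
  "unif_attracting U Lam K \<longleftrightarrow>
     (\<forall>C. bounded C \<and> C \<noteq> {} \<longrightarrow>
        (\<forall>\<epsilon>>0. \<exists>T. \<forall>t \<tau>. t - \<tau> \<ge> T \<longrightarrow>
            (SUP \<sigma>\<in>Lam. hsemidist (U \<sigma> t \<tau> ` C) K) \<le> ereal \<epsilon>))"

end

theory Submission
  imports Defs
begin

text \<open>For fixed t, \<tau> and x, the parameters \<sigma> for which U \<sigma> t \<tau> x lies within \<epsilon> of K
  form a closed set, being the preimage of a closed set under a continuous map. Once t - \<tau> is
  large, uniform attraction for the dense subfamily puts the dense subset inside this closed set,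
  which is therefore everything.\<close>

lemma INF_ereal_dist_eq_infdist:
  fixes K :: "'a::metric_space set"
  assumes "K \<noteq> {}"
  shows "(INF \<xi>\<in>K. ereal (dist y \<xi>)) = ereal (infdist y K)"
proof -
  obtain \<xi>\<^sub>0 where "\<xi>\<^sub>0 \<in> K" using assms by blast
  then have "(INF \<xi>\<in>K. ereal (dist y \<xi>)) \<le> ereal (dist y \<xi>\<^sub>0)"
    by (rule INF_lower2) simp
  moreover have "0 \<le> (INF \<xi>\<in>K. ereal (dist y \<xi>))"
    by (rule INF_greatest) simp
  ultimately have "\<bar>INF \<xi>\<in>K. ereal (dist y \<xi>)\<bar> \<noteq> \<infinity>"
    by auto
  then show ?thesis
    using assms by (simp add: ereal_INF infdist_notempty)
qed

lemma closed_INF_ereal_dist_le: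
  fixes K :: "'a::metric_space set"
  shows "closed {y. (INF \<xi>\<in>K. ereal (dist y \<xi>)) \<le> ereal e}"
proof (cases "K = {}")
  case False
  then show ?thesis
    by (simp add: INF_ereal_dist_eq_infdist closed_Collect_le continuous_on_infdist
        continuous_on_const)
qed simp

lemma hsemidist_le_on_closure:
  fixes F :: "'s::topological_space \<Rightarrow> 'a::metric_space \<Rightarrow> 'a"
  assumes cont: "\<And>x. x \<in> C \<Longrightarrow> continuous_on (closure S) (\<lambda>\<sigma>. F \<sigma> x)"
    and le: "\<And>\<sigma>. \<sigma> \<in> S \<Longrightarrow> hsemidist (F \<sigma> ` C) K \<le> ereal e"
    and \<sigma>: "\<sigma> \<in> closure S"
  shows "hsemidist (F \<sigma> ` C) K \<le> ereal e"
  unfolding hsemidist_def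
proof (rule SUP_least, clarify)
  fix x assume "x \<in> C"
  let ?near = "{y. (INF \<xi>\<in>K. ereal (dist y \<xi>)) \<le> ereal e}"
  have "closed (closure S \<inter> (\<lambda>\<sigma>. F \<sigma> x) -` ?near)"
    using cont[OF \<open>x \<in> C\<close>] by (intro continuous_closed_preimage closed_INF_ereal_dist_le) auto
  moreover have "S \<subseteq> closure S \<inter> (\<lambda>\<sigma>. F \<sigma> x) -` ?near"
  proof
    fix s assume "s \<in> S"
    then have "(INF \<xi>\<in>K. ereal (dist (F s x) \<xi>)) \<le> ereal e"
      using le[OF \<open>s \<in> S\<close>] \<open>x \<in> C\<close> unfolding hsemidist_def by (simp add: SUP_le_iff)
    then show "s \<in> closure S \<inter> (\<lambda>\<sigma>. F \<sigma> x) -` ?near"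
      using \<open>s \<in> S\<close> closure_subset by blast
  qed
  ultimately have "closure S \<subseteq> (\<lambda>\<sigma>. F \<sigma> x) -` ?near"
    using closure_minimal by blast
  then show "(INF \<xi>\<in>K. ereal (dist (F \<sigma> x) \<xi>)) \<le> ereal e"
    using \<sigma> by blast
qed

theorem proposition3p10:
  fixes U :: "'s::metric_space \<Rightarrow> real \<Rightarrow> real \<Rightarrow> 'a::metric_space \<Rightarrow> 'a"
    and \<Sigma>\<^sub>0 :: "'s set" and K :: "'a set"
  assumes proc: "\<And>\<sigma>. is_process (U \<sigma>)"
    and dense: "closure \<Sigma>\<^sub>0 = UNIV"
    and cont: "\<And>C. bounded C \<Longrightarrow> \<exists>t\<^sub>C \<ge> 0. \<forall>x\<in>C. \<forall>t \<tau>. t - \<tau> \<ge> t\<^sub>C \<longrightarrow>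
                 continuous_on UNIV (\<lambda>\<sigma>. U \<sigma> t \<tau> x)"
    and attr: "unif_attracting U \<Sigma>\<^sub>0 K"
  shows "unif_attracting U UNIV K"
  unfolding unif_attracting_def
proof (intro allI impI)
  fix C :: "'a set" and \<epsilon> :: real
  assume C: "bounded C \<and> C \<noteq> {}" and "\<epsilon> > 0"
  obtain t\<^sub>C where "\<forall>x\<in>C. \<forall>t \<tau>. t - \<tau> \<ge> t\<^sub>C \<longrightarrow> continuous_on UNIV (\<lambda>\<sigma>. U \<sigma> t \<tau> x)"
    using cont C by blast
  then have t\<^sub>C: "continuous_on UNIV (\<lambda>\<sigma>. U \<sigma> t \<tau> x)" if "x \<in> C" "t - \<tau> \<ge> t\<^sub>C" for x t \<tau>
    using that by blast
  obtain T where T: "\<And>t \<tau>. t - \<tau> \<ge> T \<Longrightarrow> (SUP \<sigma>\<in>\<Sigma>\<^sub>0. hsemidist (U \<sigma> t \<tau> ` C) K) \<le> ereal \<epsilon>"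
    using attr C \<open>\<epsilon> > 0\<close> unfolding unif_attracting_def by blast
  have "(SUP \<sigma>\<in>UNIV. hsemidist (U \<sigma> t \<tau> ` C) K) \<le> ereal \<epsilon>" if "t - \<tau> \<ge> max T t\<^sub>C" for t \<tau>
  proof (rule SUP_least)
    from that have "t - \<tau> \<ge> T" and "t - \<tau> \<ge> t\<^sub>C"
      by simp_all
    fix \<sigma> :: 's
    show "hsemidist (U \<sigma> t \<tau> ` C) K \<le> ereal \<epsilon>"
    proof (rule hsemidist_le_on_closure[where S = \<Sigma>\<^sub>0])
      show "continuous_on (closure \<Sigma>\<^sub>0) (\<lambda>\<sigma>. U \<sigma> t \<tau> x)" if "x \<in> C" for x
        using t\<^sub>C[OF that \<open>t - \<tau> \<ge> t\<^sub>C\<close>] dense by simp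
      show "hsemidist (U s t \<tau> ` C) K \<le> ereal \<epsilon>" if "s \<in> \<Sigma>\<^sub>0" for s
        using SUP_upper[OF that] T[OF \<open>t - \<tau> \<ge> T\<close>] by (rule order_trans)
    qed (simp add: dense)
  qed
  then show "\<exists>T. \<forall>t \<tau>. t - \<tau> \<ge> T \<longrightarrow> (SUP \<sigma>\<in>UNIV. hsemidist (U \<sigma> t \<tau> ` C) K) \<le> ereal \<epsilon>"
    by blast
qed

end
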